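(* Let $\mathcal{M} = \langle\{\mathbf{C},\mathbf{X},Y\}, \mathbf{U}, \mathbf{f}, \mathsf{P}_{U}\rangle$ be a structural causal model with covariates $\mathbf{C}$, two treatments $\mathbf{X}=(X_i,X_j)$, and outcome $Y$, with structural equations $$X_{i} = f_{i}(\mathbf{C}) + U_{i}, \qquad X_{j}=f_{j}(\mathbf{C}, X_{i}) + U_{j}, \qquad Y = f_{Y}(\mathbf{C}, \mathbf{X}) + U_{Y},$$ where the noise vector $(U_i,U_j,U_Y)$ has distribution $\mathsf{P}_{U} = \mathcal{N}(0,\Sigma)$ for some covariance matrix $\Sigma$. Then the estimand $\mathbb{E}[Y \mid \mathrm{do}(X_{j}),\mathbf{C}]$ is identifiable from the conjunction of two data regimes: (1) the observational distribution, and (2) the joint interventional distribution on $(X_{i},X_{j})$.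
   Context: A structural causal model (SCM) consists of endogenous variables, exogenous noise variables $\mathbf{U}$ with joint distribution $\mathsf{P}_U$, and structural equations expressing each endogenous variable as a function of its parents in a causal graph and its noise term. An intervention $\mathrm{do}(X=x)$ replaces the structural equation of $X$ by the constant $x$; a joint intervention $\mathrm{do}(X_i=x_i,X_j=x_j)$ does so for both variables. The observational distribution is the joint distribution of $(\mathbf{C},\mathbf{X},Y)$ induced by the SCM; the joint interventional distribution on $(X_i,X_j)$ is the family of distributions induced under $\mathrm{do}(X_i=x_i,X_j=x_j)$ for all values $(x_i,x_j)$. An estimand is identifiable from given data regimes (within the stated model class) if any two SCMs of the class that induce the same distributions in those data regimes also yield the same value of the estimand. *)

theory Defs
  imports "HOL-Analysis.Analysis" "HOL-Probability.Probability"
begin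

text \<open>Covariance matrices of the noise vector (U_i, U_j, U_Y); index 0 = U_i,
  index 1 = U_j, index 2 = U_Y.  A (nondegenerate) covariance matrix is a
  symmetric positive definite 3x3 real matrix.\<close>

definition pos_def_cov :: "real^3^3 \<Rightarrow> bool" where
  "pos_def_cov S \<longleftrightarrow> transpose S = S \<and> (\<forall>x. x \<noteq> 0 \<longrightarrow> x \<bullet> (S *v x) > 0)"

definition gauss_density :: "real^3^3 \<Rightarrow> real^3 \<Rightarrow> real" where
  "gauss_density S u =
     exp (- (u \<bullet> (matrix_inv S *v u)) / 2) / sqrt ((2 * pi) ^ 3 * det S)"

definition mvn :: "real^3^3 \<Rightarrow> (real^3) measure" where
  "mvn S = density lborel (\<lambda>u. ennreal (gauss_density S u))"

record 'c gscm =
  CovDist :: "'c measure"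
  fI :: "'c \<Rightarrow> real"
  fJ :: "'c \<Rightarrow> real \<Rightarrow> real"
  fY :: "'c \<Rightarrow> real \<Rightarrow> real \<Rightarrow> real"
  Sig :: "real^3^3"

definition gauss_scm :: "'c measure \<Rightarrow> 'c gscm \<Rightarrow> bool" where
  "gauss_scm MC M \<longleftrightarrow>
     prob_space (CovDist M) \<and> sets (CovDist M) = sets MC \<and>
     fI M \<in> borel_measurable MC \<and>
     (\<lambda>(c, x). fJ M c x) \<in> borel_measurable (MC \<Otimes>\<^sub>M borel) \<and>
     (\<lambda>(c, x, y). fY M c x y) \<in> borel_measurable (MC \<Otimes>\<^sub>M (borel \<Otimes>\<^sub>M borel)) \<and>
     pos_def_cov (Sig M)"

definition exo :: "'c gscm \<Rightarrow> ('c \<times> (real^3)) measure" where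
  "exo M = CovDist M \<Otimes>\<^sub>M mvn (Sig M)"

text \<open>Solutions of the structural equations under optional interventions
  do(X_i = a) (di = Some a) and do(X_j = b) (dj = Some b).\<close>
definition xi_val :: "'c gscm \<Rightarrow> real option \<Rightarrow> 'c \<Rightarrow> real^3 \<Rightarrow> real" where
  "xi_val M di c u = (case di of None \<Rightarrow> fI M c + u $ 0 | Some a \<Rightarrow> a)"

definition xj_val :: "'c gscm \<Rightarrow> real option \<Rightarrow> real option \<Rightarrow> 'c \<Rightarrow> real^3 \<Rightarrow> real" where
  "xj_val M di dj c u =
     (case dj of None \<Rightarrow> fJ M c (xi_val M di c u) + u $ 1 | Some b \<Rightarrow> b)"

definition y_val :: "'c gscm \<Rightarrow> real option \<Rightarrow> real option \<Rightarrow> 'c \<Rightarrow> real^3 \<Rightarrow> real" where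
  "y_val M di dj c u = fY M c (xi_val M di c u) (xj_val M di dj c u) + u $ 2"

definition induced :: "'c gscm \<Rightarrow> real option \<Rightarrow> real option \<Rightarrow> ('c \<times> real \<times> real \<times> real) measure" where
  "induced M di dj =
     distr (exo M) (CovDist M \<Otimes>\<^sub>M (borel :: (real \<times> real \<times> real) measure))
       (\<lambda>(c, u). (c, xi_val M di c u, xj_val M di dj c u, y_val M di dj c u))"

definition obs_dist :: "'c gscm \<Rightarrow> ('c \<times> real \<times> real \<times> real) measure" where
  "obs_dist M = induced M None None"

definition joint_int_dist :: "'c gscm \<Rightarrow> real \<Rightarrow> real \<Rightarrow> ('c \<times> real \<times> real \<times> real) measure" where
  "joint_int_dist M a b = induced M (Some a) (Some b)"

text \<open>The estimand E[Y | do(X_j = x), C = c]: since C is independent of the noise,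
  this is the mean of Y over the noise under do(X_j = x) with C fixed to c.\<close>
definition estimand :: "'c gscm \<Rightarrow> real \<Rightarrow> 'c \<Rightarrow> real" where
  "estimand M x c = (\<integral>u. y_val M None (Some x) c u \<partial>mvn (Sig M))"

end

theory Submission
  imports Defs
begin

(* Under do(X_j = x) the outcome is Y = f_Y(C, X_i, x) + U_Y with X_i = f_i(C) + U_i. Because U_Y
   enters additively, its correlation with U_i is irrelevant for the mean: E[Y | do(X_j = x), C = c]
   is the average, over the conditional law of X_i given C = c, of the joint-interventional regression
   m(c, a) = E[Y | do(X_i = a, X_j = x), C = c] = f_Y(c, a, x) + E[U_Y]. The observational distribution
   identifies the law of C and, for almost every c, the conditional law of X_i (disintegration). The
   joint interventional distributions identify m(c, a) for almost every c, for each a, hence by Fubini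
   for almost every (c, a). As the conditional law of X_i has a density, the Lebesgue-null exceptional
   sets of a do not affect the average. Gaussianity of the noise enters only through the integrability
   of U_Y and the absolute continuity of U_i. *)

section \<open>Gaussian noise\<close>

lemma matrix_inv_quadratic_form_pos:
  fixes S :: "real^'n^'n"
  assumes pos: "\<And>x. x \<noteq> 0 \<Longrightarrow> x \<bullet> (S *v x) > 0" and "u \<noteq> 0"
  shows "u \<bullet> (matrix_inv S *v u) > 0"
proof -
  have "inj ((*v) S)"
  proof (rule injI)
    fix x y assume "S *v x = S *v y"
    then have "S *v (x - y) = 0" by (simp add: matrix_vector_mult_diff_distrib)
    then show "x = y" using pos[of "x - y"] by (cases "x = y") auto
  qed
  then have "invertible S"
    using matrix_left_invertible_injective invertible_left_inverse by blast
  then have "S ** matrix_inv S = mat 1"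
    unfolding invertible_def matrix_inv_def by (rule someI2_ex) simp
  define v where "v = matrix_inv S *v u"
  have "S *v v = u"
    using \<open>S ** matrix_inv S = mat 1\<close> by (simp add: v_def matrix_vector_mul_assoc)
  then have "v \<noteq> 0" using \<open>u \<noteq> 0\<close> by auto
  have "u \<bullet> (matrix_inv S *v u) = v \<bullet> (S *v v)"
    using \<open>S *v v = u\<close> by (simp add: v_def inner_commute)
  then show ?thesis using pos[OF \<open>v \<noteq> 0\<close>] by simp
qed

lemma quadratic_form_coercive:
  fixes A :: "real^'n^'n"
  assumes pos: "\<And>u. u \<noteq> 0 \<Longrightarrow> u \<bullet> (A *v u) > 0"
  obtains l where "l > 0" "\<And>u. l * (u \<bullet> u) \<le> u \<bullet> (A *v u)"
proof -
  let ?q = "\<lambda>u::real^'n. u \<bullet> (A *v u)"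
  have "continuous_on (sphere 0 1) ?q"
    by (intro continuous_intros)
  moreover have "sphere (0::real^'n) 1 \<noteq> {}"
    by (simp add: sphere_eq_empty)
  ultimately obtain x0 where x0: "x0 \<in> sphere 0 1" and min: "\<And>y. y \<in> sphere 0 1 \<Longrightarrow> ?q x0 \<le> ?q y"
    using continuous_attains_inf[OF compact_sphere] by blast
  have "?q x0 > 0" using x0 by (intro pos) auto
  moreover have "?q x0 * (u \<bullet> u) \<le> ?q u" for u
  proof (cases "u = 0")
    case False
    define w where "w = (1 / norm u) *\<^sub>R u"
    have "w \<in> sphere 0 1" using False by (simp add: w_def)
    have "u = norm u *\<^sub>R w" using False by (simp add: w_def)
    moreover have "?q (t *\<^sub>R w) = t\<^sup>2 * ?q w" for t
      by (simp add: matrix_vector_mult_scaleR power2_eq_square)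
    ultimately have "?q u = (u \<bullet> u) * ?q w"
      by (metis power2_norm_eq_inner)
    then show ?thesis
      using min[OF \<open>w \<in> sphere 0 1\<close>] by (simp add: mult.commute mult_left_mono)
  qed simp
  ultimately show ?thesis using that by blast
qed

lemma gauss_density_le_normal_product:
  assumes "pos_def_cov S"
  obtains \<sigma> K where "\<sigma> > 0" "K \<ge> 0"
    "\<And>u. gauss_density S u \<le> K * (\<Prod>b\<in>Basis. normal_density 0 \<sigma> (u \<bullet> b))"
proof -
  have "\<And>u. u \<noteq> 0 \<Longrightarrow> u \<bullet> (matrix_inv S *v u) > 0"
    using assms matrix_inv_quadratic_form_pos unfolding pos_def_cov_def by blast
  then obtain l where l: "l > 0" "\<And>u. l * (u \<bullet> u) \<le> u \<bullet> (matrix_inv S *v u)"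
    using quadratic_form_coercive by blast
  define \<sigma> where "\<sigma> = 1 / sqrt l"
  define c where "c = sqrt (2 * pi * \<sigma>\<^sup>2)"
  define K where "K = \<bar>1 / sqrt ((2 * pi) ^ 3 * det S)\<bar> * c ^ 3"
  have "\<sigma> > 0" "c > 0" using l by (simp_all add: \<sigma>_def c_def)
  have normal: "normal_density 0 \<sigma> x = exp (- l * x\<^sup>2 / 2) / c" for x
  proof -
    have s2: "2 * \<sigma>\<^sup>2 = 2 / l" using l by (simp add: \<sigma>_def power_divide)
    show ?thesis unfolding normal_density_def c_def s2 using l by (simp add: field_simps)
  qed
  have bound: "gauss_density S u \<le> K * (\<Prod>b\<in>Basis. normal_density 0 \<sigma> (u \<bullet> b))" for u :: "real^3"
  proof -
    have "(\<Prod>b\<in>Basis. normal_density 0 \<sigma> (u \<bullet> b)) = exp (\<Sum>b\<in>Basis. - l * (u \<bullet> b)\<^sup>2 / 2) / c ^ 3"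
      by (simp add: normal prod_dividef exp_sum)
    also have "(\<Sum>b\<in>Basis. - l * (u \<bullet> b)\<^sup>2 / 2) = - l * (u \<bullet> u) / 2"
      by (subst (2) euclidean_inner) (simp add: sum_divide_distrib sum_distrib_left power2_eq_square)
    finally have prod: "(\<Prod>b\<in>Basis. normal_density 0 \<sigma> (u \<bullet> b)) = exp (- l * (u \<bullet> u) / 2) / c ^ 3" .
    have "gauss_density S u = 1 / sqrt ((2 * pi) ^ 3 * det S) * exp (- (u \<bullet> (matrix_inv S *v u)) / 2)"
      unfolding gauss_density_def by simp
    also have "\<dots> \<le> \<bar>1 / sqrt ((2 * pi) ^ 3 * det S)\<bar> * exp (- (u \<bullet> (matrix_inv S *v u)) / 2)"
      by (rule mult_right_mono[OF abs_ge_self]) simp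
    also have "\<dots> \<le> \<bar>1 / sqrt ((2 * pi) ^ 3 * det S)\<bar> * exp (- l * (u \<bullet> u) / 2)"
      using l(2)[of u] by (intro mult_left_mono) auto
    finally show ?thesis
      using \<open>c > 0\<close> by (simp add: prod K_def)
  qed
  show ?thesis
    by (rule that[OF \<open>\<sigma> > 0\<close> _ bound]) (use \<open>c > 0\<close> in \<open>simp add: K_def\<close>)
qed

lemma borel_measurable_gauss_density[measurable]: "gauss_density S \<in> borel_measurable borel"
proof -
  have "gauss_density S = (\<lambda>u. exp (- (u \<bullet> (matrix_inv S *v u)) / 2) * (1 / sqrt ((2 * pi) ^ 3 * det S)))"
    unfolding gauss_density_def by auto
  moreover have "continuous_on UNIV (\<lambda>u. exp (- (u \<bullet> (matrix_inv S *v u)) / 2) * (1 / sqrt ((2 * pi) ^ 3 * det S)))"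
    by (intro continuous_intros) auto
  ultimately show ?thesis by (simp add: borel_measurable_continuous_onI)
qed

lemma sets_mvn[simp, measurable_cong]: "sets (mvn S) = sets borel"
  by (simp add: mvn_def)

lemma space_mvn[simp]: "space (mvn S) = UNIV"
  by (simp add: mvn_def)

lemma nn_integral_gauss_density_moment_finite:
  assumes "pos_def_cov S"
  shows "(\<integral>\<^sup>+u. ennreal (gauss_density S u) * ennreal (1 + \<bar>u $ i\<bar>) \<partial>lborel) < \<infinity>"
proof -
  obtain \<sigma> K where "\<sigma> > 0" "K \<ge> 0"
    and bound: "\<And>u. gauss_density S u \<le> K * (\<Prod>b\<in>Basis. normal_density 0 \<sigma> (u \<bullet> b))"
    using gauss_density_le_normal_product[OF assms] by blast
  define g where "g = (\<lambda>x. normal_density 0 \<sigma> x * (1 + \<bar>x\<bar>))"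
  have g_nonneg: "g x \<ge> 0" for x by (simp add: g_def)
  have "axis i 1 \<in> (Basis :: (real^3) set)" by simp
  have "1 + \<bar>u $ i\<bar> \<le> (\<Prod>b\<in>Basis. 1 + \<bar>u \<bullet> b\<bar>)" for u :: "real^3"
  proof -
    have "1 \<le> (\<Prod>b\<in>Basis - {axis i 1}. 1 + \<bar>u \<bullet> b\<bar>)"
      by (intro prod_ge_1) auto
    then have "1 + \<bar>u $ i\<bar> \<le> (1 + \<bar>u \<bullet> axis i 1\<bar>) * (\<Prod>b\<in>Basis - {axis i 1}. 1 + \<bar>u \<bullet> b\<bar>)"
      by (simp add: cart_eq_inner_axis mult_le_cancel_left1)
    also have "\<dots> = (\<Prod>b\<in>Basis. 1 + \<bar>u \<bullet> b\<bar>)"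
      using \<open>axis i 1 \<in> Basis\<close> by (rule prod.remove[symmetric, OF finite_Basis])
    finally show ?thesis .
  qed
  then have "ennreal (gauss_density S u) * ennreal (1 + \<bar>u $ i\<bar>)
      \<le> ennreal (K * (\<Prod>b\<in>Basis. normal_density 0 \<sigma> (u \<bullet> b)))
        * ennreal (\<Prod>b\<in>Basis. 1 + \<bar>u \<bullet> b\<bar>)" for u
    by (intro mult_mono ennreal_leI bound) auto
  also have "\<dots> u = ennreal (K * (\<Prod>b\<in>Basis. g (u \<bullet> b)))" for u :: "real^3"
    using \<open>K \<ge> 0\<close> by (subst ennreal_mult[symmetric]) (auto simp: g_def prod.distrib mult.assoc prod_nonneg)
  also have "\<dots> u = ennreal K * (\<Prod>b\<in>Basis. ennreal (g (u \<bullet> b)))" for u :: "real^3"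
    using \<open>K \<ge> 0\<close> g_nonneg by (simp add: ennreal_mult prod_nonneg prod_ennreal)
  finally have "(\<integral>\<^sup>+u. ennreal (gauss_density S u) * ennreal (1 + \<bar>u $ i\<bar>) \<partial>lborel)
      \<le> (\<integral>\<^sup>+(u::real^3). ennreal K * (\<Prod>b\<in>Basis. ennreal (g (u \<bullet> b))) \<partial>lborel)"
    by (intro nn_integral_mono)
  also have "\<dots> = ennreal K * (\<integral>\<^sup>+(u::real^3). (\<Prod>b\<in>Basis. ennreal (g (u \<bullet> b))) \<partial>lborel)"
    by (rule nn_integral_cmult) (simp add: g_def)
  also have "(\<integral>\<^sup>+(u::real^3). (\<Prod>b\<in>Basis. ennreal (g (u \<bullet> b))) \<partial>lborel)
      = (\<Prod>b\<in>(Basis :: (real^3) set). \<integral>\<^sup>+x. ennreal (g x) \<partial>lborel)"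
    by (rule nn_integral_lborel_prod) (simp_all add: g_def)
  also have "ennreal K * (\<Prod>b\<in>(Basis :: (real^3) set). \<integral>\<^sup>+x. ennreal (g x) \<partial>lborel) < \<infinity>"
  proof -
    have "integrable lborel (\<lambda>x. normal_density 0 \<sigma> x + normal_density 0 \<sigma> x * \<bar>x - 0\<bar> ^ 1)"
      using \<open>\<sigma> > 0\<close> by (intro Bochner_Integration.integrable_add integrable_normal_density integrable_normal_moment_abs)
    then have "integrable lborel g"
      by (simp add: g_def algebra_simps)
    then have "(\<integral>\<^sup>+x. ennreal (g x) \<partial>lborel) < \<infinity>"
      by (simp add: integrable_iff_bounded g_def abs_mult)
    then show ?thesis
      by (simp add: ennreal_mult_eq_top_iff less_top[symmetric] power_eq_top_ennreal)
  qed
  finally show ?thesis .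
qed

lemma finite_measure_mvn:
  assumes "pos_def_cov S" shows "finite_measure (mvn S)"
proof (rule finite_measureI)
  have "emeasure (mvn S) (space (mvn S)) = (\<integral>\<^sup>+u. ennreal (gauss_density S u) * ennreal 1 \<partial>lborel)"
    unfolding mvn_def by (simp add: emeasure_density)
  also have "\<dots> \<le> (\<integral>\<^sup>+u. ennreal (gauss_density S u) * ennreal (1 + \<bar>u $ 0\<bar>) \<partial>lborel)"
    by (intro nn_integral_mono mult_left_mono ennreal_leI) auto
  also have "\<dots> < \<infinity>"
    by (rule nn_integral_gauss_density_moment_finite[OF assms])
  finally show "emeasure (mvn S) (space (mvn S)) \<noteq> \<infinity>" by simp
qed

lemma integrable_mvn_component:
  assumes "pos_def_cov S" shows "integrable (mvn S) (\<lambda>u. u $ i)"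
  unfolding integrable_iff_bounded
proof
  show "(\<lambda>u. u $ i) \<in> borel_measurable (mvn S)" by simp
  have "(\<integral>\<^sup>+u. ennreal (norm (u $ i)) \<partial>mvn S)
      = (\<integral>\<^sup>+u. ennreal (gauss_density S u) * ennreal \<bar>u $ i\<bar> \<partial>lborel)"
    unfolding mvn_def by (subst nn_integral_density) auto
  also have "\<dots> \<le> (\<integral>\<^sup>+u. ennreal (gauss_density S u) * ennreal (1 + \<bar>u $ i\<bar>) \<partial>lborel)"
    by (intro nn_integral_mono mult_left_mono ennreal_leI) auto
  also have "\<dots> < \<infinity>"
    by (rule nn_integral_gauss_density_moment_finite[OF assms])
  finally show "(\<integral>\<^sup>+u. ennreal (norm (u $ i)) \<partial>mvn S) < \<infinity>" .
qed

lemma null_sets_lborel_component_vimage: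
  assumes "N \<in> null_sets lborel"
  shows "{u::real^'n. t + u $ i \<in> N} \<in> null_sets lborel"
proof -
  have [measurable]: "N \<in> sets borel" using assms by auto
  define f where "f (b :: real^'n) (x :: real) = (if b = axis i 1 then indicator N (t + x) else 1 :: ennreal)" for b x
  have "axis i (1::real) \<in> Basis" by simp
  have "(\<Prod>b\<in>Basis. f b (u \<bullet> b)) = f (axis i 1) (u \<bullet> axis i 1) * (\<Prod>b\<in>Basis - {axis i 1}. f b (u \<bullet> b))"
    for u :: "real^'n"
    using \<open>axis i 1 \<in> Basis\<close> by (rule prod.remove[OF finite_Basis])
  then have "indicator {u::real^'n. t + u $ i \<in> N} u = (\<Prod>b\<in>Basis. f b (u \<bullet> b))" for u :: "real^'n"
    by (simp add: f_def cart_eq_inner_axis indicator_def)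
  then have "emeasure lborel {u::real^'n. t + u $ i \<in> N} = (\<integral>\<^sup>+u. (\<Prod>b\<in>Basis. f b (u \<bullet> b)) \<partial>lborel)"
    by (simp flip: nn_integral_indicator)
  also have "\<dots> = (\<Prod>b\<in>(Basis :: (real^'n) set). \<integral>\<^sup>+x. f b x \<partial>lborel)"
    by (rule nn_integral_lborel_prod) (auto simp: f_def)
  also have "\<dots> = 0"
  proof -
    have "(\<integral>\<^sup>+x. indicator N (t + x) \<partial>lborel) = emeasure lborel N"
      using nn_integral_real_affine[of "indicator N" 1 t] by simp
    then show ?thesis
      using assms \<open>axis i 1 \<in> Basis\<close> by (intro prod_zero bexI[of _ "axis i 1"]) (auto simp: f_def)
  qed
  finally show ?thesis by (auto simp: null_sets_def)
qed

lemma AE_mvn_component_shift: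
  assumes "AE a in lborel. P a"
  shows "AE u in mvn S. P (t + u $ i)"
proof -
  obtain N where N: "{a. \<not> P a} \<subseteq> N" "emeasure lborel N = 0" "N \<in> sets lborel"
    using AE_E[OF assms] by auto
  then have "N \<in> null_sets lborel" by (intro null_setsI) auto
  have "AE u in lborel. t + u $ i \<notin> N"
    using null_sets_lborel_component_vimage[OF \<open>N \<in> null_sets lborel\<close>] by (rule AE_not_in[THEN AE_mp]) auto
  then have "AE u in lborel. P (t + u $ i)"
    by eventually_elim (use N(1) in auto)
  then show ?thesis
    unfolding mvn_def by (subst AE_density) (auto elim: AE_mp)
qed


section \<open>Integrals and disintegration\<close>

(* Also true when g is not integrable: both integrals are then 0 by convention. *)
lemma integral_add_integrable_rescaled:
  assumes "finite_measure P" "integrable P w" "measure P (space P) \<noteq> 0"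
    and [measurable]: "g \<in> borel_measurable P"
  shows "measure P (space P) * (\<integral>u. g u + w u \<partial>P)
    = (\<integral>u. measure P (space P) * g u + (\<integral>v. w v \<partial>P) \<partial>P)"
proof (cases "integrable P g")
  case True
  then show ?thesis
    using assms by (simp add: finite_measure.integrable_const distrib_left)
next
  case False
  interpret finite_measure P by fact
  have "\<not> integrable P (\<lambda>u. g u + w u)"
    using False Bochner_Integration.integrable_diff[of P "\<lambda>u. g u + w u" w] assms(2) by auto
  moreover have "\<not> integrable P (\<lambda>u. measure P (space P) * g u + (\<integral>v. w v \<partial>P))"
  proof
    assume "integrable P (\<lambda>u. measure P (space P) * g u + (\<integral>v. w v \<partial>P))"
    then have "integrable P
        (\<lambda>u. ((measure P (space P) * g u + (\<integral>v. w v \<partial>P)) - (\<integral>v. w v \<partial>P)) / measure P (space P))"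
      by (intro integrable_divide Bochner_Integration.integrable_diff) auto
    then show False using False assms(3) by simp
  qed
  ultimately show ?thesis by (simp add: not_integrable_integral_eq)
qed

lemma sets_borel_eq_sigma_greaterThan_Rats:
  "sets (borel :: real measure) = sigma_sets UNIV (greaterThan ` \<rat>)"
proof -
  have "sets (borel :: real measure) = sigma_sets UNIV (range greaterThan)"
    by (subst borel_Ioi) simp
  also have "\<dots> = sigma_sets UNIV (greaterThan ` \<rat>)"
  proof (rule sigma_sets_eqI)
    fix A :: "real set" assume "A \<in> range greaterThan"
    then obtain x where "A = {x<..}" by auto
    then have "A = (\<Union>q\<in>{q\<in>\<rat>. x < q}. {q<..})"
      by (auto dest: Rats_dense_in_real)
    also have "\<dots> \<in> sigma_sets UNIV (greaterThan ` \<rat>)"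
      by (intro sigma_sets_UNION) (auto intro: countable_image countable_subset[OF _ countable_rat])
    finally show "A \<in> sigma_sets UNIV (greaterThan ` \<rat>)" .
  qed auto
  finally show ?thesis .
qed

lemma measure_eqI_greaterThan_Rats:
  fixes M N :: "real measure"
  assumes "sets M = sets borel" "sets N = sets borel" "finite_measure M"
    and "\<And>q. q \<in> \<rat> \<Longrightarrow> emeasure M {q<..} = emeasure N {q<..}"
  shows "M = N"
proof (rule measure_eqI_generator_eq_countable[where E="greaterThan ` \<rat>" and A="greaterThan ` \<rat>"])
  show "Int_stable (greaterThan ` (\<rat> :: real set))"
  proof (rule Int_stableI_image)
    fix a b :: real assume "a \<in> \<rat>" "b \<in> \<rat>"
    then show "\<exists>q\<in>\<rat>. {a<..} \<inter> {b<..} = {q<..}"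
      by (intro bexI[of _ "max a b"]) (auto simp: max_def)
  qed
  show "\<Union> (greaterThan ` \<rat>) = (UNIV :: real set)"
    by (auto intro: Rats_no_bot_less)
  show "\<And>A. A \<in> greaterThan ` \<rat> \<Longrightarrow> emeasure M A \<noteq> \<infinity>"
    using finite_measure.emeasure_finite[OF assms(3)] by auto
qed (use assms sets_borel_eq_sigma_greaterThan_Rats in \<open>auto intro: countable_rat\<close>)

(* For each Borel set B the two kernels agree almost everywhere by uniqueness of densities; the
   countably many rational rays then determine the measures. *)
lemma AE_distr_eq_if_mixtures_eq:
  fixes h1 :: "'c \<Rightarrow> 'u \<Rightarrow> real" and h2 :: "'c \<Rightarrow> 'v \<Rightarrow> real"
  assumes "sigma_finite_measure C" "finite_measure P1" "finite_measure P2"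
    and [measurable]: "(\<lambda>(c, u). h1 c u) \<in> borel_measurable (C \<Otimes>\<^sub>M P1)"
      "(\<lambda>(c, v). h2 c v) \<in> borel_measurable (C \<Otimes>\<^sub>M P2)"
    and mixtures_eq: "\<And>A B. A \<in> sets C \<Longrightarrow> B \<in> sets borel \<Longrightarrow>
       (\<integral>\<^sup>+c. emeasure P1 {u \<in> space P1. h1 c u \<in> B} * indicator A c \<partial>C) =
       (\<integral>\<^sup>+c. emeasure P2 {v \<in> space P2. h2 c v \<in> B} * indicator A c \<partial>C)"
  shows "AE c in C. distr P1 borel (h1 c) = distr P2 borel (h2 c)"
proof -
  interpret C: sigma_finite_measure C by fact
  interpret P1: finite_measure P1 by fact
  interpret P2: finite_measure P2 by fact
  have AE_B: "AE c in C. emeasure P1 {u \<in> space P1. h1 c u \<in> B} = emeasure P2 {v \<in> space P2. h2 c v \<in> B}"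
    if [measurable]: "B \<in> sets borel" for B
    by (rule C.density_unique2) (use mixtures_eq in \<open>auto simp: mult.commute\<close>)
  have "AE c in C. \<forall>q\<in>\<rat>. emeasure P1 {u \<in> space P1. h1 c u \<in> {q<..}} = emeasure P2 {v \<in> space P2. h2 c v \<in> {q<..}}"
    by (subst AE_ball_countable[OF countable_rat]) (intro ballI AE_B borel_open open_greaterThan)
  then show ?thesis
  proof (rule AE_mp, intro AE_I2 impI)
    fix c assume "c \<in> space C"
      and rays_eq: "\<forall>q\<in>\<rat>. emeasure P1 {u \<in> space P1. h1 c u \<in> {q<..}} = emeasure P2 {v \<in> space P2. h2 c v \<in> {q<..}}"
    have [measurable]: "h1 c \<in> borel_measurable P1" "h2 c \<in> borel_measurable P2"
      using \<open>c \<in> space C\<close> by measurable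
    show "distr P1 borel (h1 c) = distr P2 borel (h2 c)"
    proof (rule measure_eqI_greaterThan_Rats)
      show "finite_measure (distr P1 borel (h1 c))" by (simp add: P1.finite_measure_distr)
    qed (use rays_eq in \<open>simp_all add: emeasure_distr vimage_def Int_def conj_commute\<close>)
  qed
qed


section \<open>The model class\<close>

lemma gauss_scmD:
  assumes "gauss_scm MC M"
  shows "prob_space (CovDist M)" "sets (CovDist M) = sets MC" "pos_def_cov (Sig M)"
  using assms unfolding gauss_scm_def by auto

lemma gauss_scm_finite_noise: "gauss_scm MC M \<Longrightarrow> finite_measure (mvn (Sig M))"
  by (rule finite_measure_mvn[OF gauss_scmD(3)])

lemma measurable_gauss_scm:
  assumes "gauss_scm MC M"
  shows "fI M \<in> borel_measurable (CovDist M)"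
    and "f \<in> measurable N (CovDist M) \<Longrightarrow> g \<in> borel_measurable N \<Longrightarrow>
      (\<lambda>x. fJ M (f x) (g x)) \<in> borel_measurable N"
    and "f \<in> measurable N (CovDist M) \<Longrightarrow> g \<in> borel_measurable N \<Longrightarrow> h \<in> borel_measurable N \<Longrightarrow>
      (\<lambda>x. fY M (f x) (g x) (h x)) \<in> borel_measurable N"
proof -
  have sets: "sets (CovDist M) = sets MC" and fI: "fI M \<in> borel_measurable MC"
    and fJ: "(\<lambda>(c, x). fJ M c x) \<in> borel_measurable (MC \<Otimes>\<^sub>M borel)"
    and fY: "(\<lambda>(c, x, y). fY M c x y) \<in> borel_measurable (MC \<Otimes>\<^sub>M (borel \<Otimes>\<^sub>M borel))"
    using assms unfolding gauss_scm_def by auto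
  show "fI M \<in> borel_measurable (CovDist M)"
    using fI by (simp add: measurable_cong_sets[OF sets refl])
  show "(\<lambda>x. fJ M (f x) (g x)) \<in> borel_measurable N"
    if "f \<in> measurable N (CovDist M)" "g \<in> borel_measurable N"
    using measurable_compose[OF measurable_Pair fJ] that
    by (simp add: measurable_cong_sets[OF refl sets])
  show "(\<lambda>x. fY M (f x) (g x) (h x)) \<in> borel_measurable N"
    if "f \<in> measurable N (CovDist M)" "g \<in> borel_measurable N" "h \<in> borel_measurable N"
    using measurable_compose[OF measurable_Pair[OF _ measurable_Pair] fY] that
    by (simp add: measurable_cong_sets[OF refl sets])
qed

lemma measurable_structural_values:
  assumes "gauss_scm MC M"
  shows "(\<lambda>(c, u). xi_val M di c u) \<in> borel_measurable (CovDist M \<Otimes>\<^sub>M mvn (Sig M))"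
    and "(\<lambda>(c, u). xj_val M di dj c u) \<in> borel_measurable (CovDist M \<Otimes>\<^sub>M mvn (Sig M))"
    and "(\<lambda>(c, u). y_val M di dj c u) \<in> borel_measurable (CovDist M \<Otimes>\<^sub>M mvn (Sig M))"
proof -
  note [measurable] = measurable_gauss_scm[OF assms] borel_measurable_nth
  show "(\<lambda>(c, u). xi_val M di c u) \<in> borel_measurable (CovDist M \<Otimes>\<^sub>M mvn (Sig M))"
    unfolding xi_val_def by (cases di) (simp_all add: case_prod_beta')
  show "(\<lambda>(c, u). xj_val M di dj c u) \<in> borel_measurable (CovDist M \<Otimes>\<^sub>M mvn (Sig M))"
    unfolding xj_val_def xi_val_def by (cases di; cases dj) (simp_all add: case_prod_beta')
  show "(\<lambda>(c, u). y_val M di dj c u) \<in> borel_measurable (CovDist M \<Otimes>\<^sub>M mvn (Sig M))"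
    unfolding y_val_def xj_val_def xi_val_def by (cases di; cases dj) (simp_all add: case_prod_beta')
qed

lemma emeasure_induced_rect:
  assumes gs: "gauss_scm MC M" and "A \<in> sets (CovDist M)"
    and "B0 \<in> sets borel" "B1 \<in> sets borel" "B2 \<in> sets borel"
  shows "emeasure (induced M di dj) (A \<times> B0 \<times> B1 \<times> B2) =
    (\<integral>\<^sup>+c. emeasure (mvn (Sig M))
        {u. xi_val M di c u \<in> B0 \<and> xj_val M di dj c u \<in> B1 \<and> y_val M di dj c u \<in> B2} * indicator A c
      \<partial>CovDist M)"
proof -
  interpret P: finite_measure "mvn (Sig M)"
    by (rule gauss_scm_finite_noise[OF gs])
  note [measurable] = measurable_structural_values[OF gs] \<open>A \<in> sets (CovDist M)\<close>
    \<open>B0 \<in> sets borel\<close> \<open>B1 \<in> sets borel\<close> \<open>B2 \<in> sets borel\<close>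
  let ?F = "\<lambda>(c, u). (c, xi_val M di c u, xj_val M di dj c u, y_val M di dj c u)"
  let ?R = "A \<times> B0 \<times> B1 \<times> B2"
  have F: "?F \<in> measurable (exo M) (CovDist M \<Otimes>\<^sub>M (borel :: (real \<times> real \<times> real) measure))"
    unfolding exo_def by (simp add: case_prod_beta')
  have R: "?R \<in> sets (CovDist M \<Otimes>\<^sub>M (borel :: (real \<times> real \<times> real) measure))"
    unfolding borel_prod[symmetric] by measurable
  have "emeasure (induced M di dj) ?R = emeasure (exo M) (?F -` ?R \<inter> space (exo M))"
    unfolding induced_def by (rule emeasure_distr[OF F R])
  also have "\<dots> = (\<integral>\<^sup>+c. emeasure (mvn (Sig M)) (Pair c -` (?F -` ?R \<inter> space (exo M))) \<partial>CovDist M)"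
    using measurable_sets[OF F R] unfolding exo_def by (rule P.emeasure_pair_measure_alt)
  also have "\<dots> = (\<integral>\<^sup>+c. emeasure (mvn (Sig M))
        {u. xi_val M di c u \<in> B0 \<and> xj_val M di dj c u \<in> B1 \<and> y_val M di dj c u \<in> B2} * indicator A c
      \<partial>CovDist M)"
  proof (intro nn_integral_cong)
    fix c assume "c \<in> space (CovDist M)"
    then have "Pair c -` (?F -` ?R \<inter> space (exo M)) = (if c \<in> A then
        {u. xi_val M di c u \<in> B0 \<and> xj_val M di dj c u \<in> B1 \<and> y_val M di dj c u \<in> B2} else {})"
      by (auto simp: exo_def space_pair_measure)
    then show "emeasure (mvn (Sig M)) (Pair c -` (?F -` ?R \<inter> space (exo M))) = emeasure (mvn (Sig M))
        {u. xi_val M di c u \<in> B0 \<and> xj_val M di dj c u \<in> B1 \<and> y_val M di dj c u \<in> B2} * indicator A c"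
      by simp
  qed
  finally show ?thesis .
qed

lemma emeasure_obs_dist_covariates:
  assumes gs: "gauss_scm MC M" and A: "A \<in> sets (CovDist M)"
  shows "emeasure (obs_dist M) (A \<times> UNIV \<times> UNIV \<times> UNIV)
    = emeasure (mvn (Sig M)) UNIV * emeasure (CovDist M) A"
  unfolding obs_dist_def
  by (subst emeasure_induced_rect[OF gs A]) (auto simp: nn_integral_cmult_indicator[OF A])

lemma emeasure_obs_dist_treatment_rect:
  assumes "gauss_scm MC M" "A \<in> sets (CovDist M)" "B \<in> sets borel"
  shows "emeasure (obs_dist M) (A \<times> B \<times> UNIV \<times> UNIV) =
    (\<integral>\<^sup>+c. emeasure (mvn (Sig M)) {u \<in> space (mvn (Sig M)). xi_val M None c u \<in> B}
      * indicator A c \<partial>CovDist M)"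
  unfolding obs_dist_def by (subst emeasure_induced_rect[OF assms]) auto

lemma emeasure_joint_int_dist_outcome_rect:
  assumes "gauss_scm MC M" "A \<in> sets (CovDist M)" "B \<in> sets borel"
  shows "emeasure (joint_int_dist M a b) (A \<times> UNIV \<times> UNIV \<times> B) =
    (\<integral>\<^sup>+c. emeasure (mvn (Sig M)) {u \<in> space (mvn (Sig M)). y_val M (Some a) (Some b) c u \<in> B}
      * indicator A c \<partial>CovDist M)"
  unfolding joint_int_dist_def by (subst emeasure_induced_rect[OF assms(1,2) _ _ assms(3)]) auto

(* E[Y | do(X_i = a, X_j = b), C = c], in the convention of estimand. *)
definition joint_do_mean :: "'c gscm \<Rightarrow> 'c \<Rightarrow> real \<Rightarrow> real \<Rightarrow> real" where
  "joint_do_mean M c a b = (\<integral>u. y_val M (Some a) (Some b) c u \<partial>mvn (Sig M))"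

lemma joint_do_mean_eq:
  assumes "gauss_scm MC M"
  shows "joint_do_mean M c a b
    = measure (mvn (Sig M)) UNIV * fY M c a b + (\<integral>u. u $ 2 \<partial>mvn (Sig M))"
proof -
  interpret finite_measure "mvn (Sig M)"
    by (rule gauss_scm_finite_noise[OF assms])
  show ?thesis
    using integrable_mvn_component[OF gauss_scmD(3)[OF assms]]
    by (simp add: joint_do_mean_def y_val_def xi_val_def xj_val_def)
qed


lemma borel_measurable_joint_do_mean:
  assumes gs: "gauss_scm MC M" and "c \<in> space (CovDist M)"
  shows "(\<lambda>a. joint_do_mean M c a b) \<in> borel_measurable borel"
proof -
  note [measurable] = measurable_gauss_scm[OF gs]
  show ?thesis
    unfolding joint_do_mean_eq[OF gs] using \<open>c \<in> space (CovDist M)\<close> by measurable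
qed


section \<open>Identification\<close>

lemma noise_mass_eq_if_obs_dist_eq:
  assumes gs1: "gauss_scm MC M1" and gs2: "gauss_scm MC M2" and "obs_dist M1 = obs_dist M2"
  shows "emeasure (mvn (Sig M1)) UNIV = emeasure (mvn (Sig M2)) UNIV"
proof -
  have "space (CovDist M1) = space MC" "space (CovDist M2) = space MC"
    using gauss_scmD(2)[OF gs1] gauss_scmD(2)[OF gs2] by (auto dest: sets_eq_imp_space_eq)
  then show ?thesis
    using emeasure_obs_dist_covariates[OF gs1 sets.top] emeasure_obs_dist_covariates[OF gs2 sets.top]
      prob_space.emeasure_space_1[OF gauss_scmD(1)[OF gs1]] prob_space.emeasure_space_1[OF gauss_scmD(1)[OF gs2]]
      assms(3)
    by simp
qed

lemma CovDist_eq_if_obs_dist_eq: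
  assumes gs1: "gauss_scm MC M1" and gs2: "gauss_scm MC M2" and obs: "obs_dist M1 = obs_dist M2"
    and nondegenerate: "emeasure (mvn (Sig M1)) UNIV \<noteq> 0"
  shows "CovDist M1 = CovDist M2"
proof (rule measure_eqI)
  show sets: "sets (CovDist M1) = sets (CovDist M2)"
    using gauss_scmD(2)[OF gs1] gauss_scmD(2)[OF gs2] by simp
  fix A assume A: "A \<in> sets (CovDist M1)"
  have "emeasure (mvn (Sig M1)) UNIV * emeasure (CovDist M1) A
      = emeasure (mvn (Sig M1)) UNIV * emeasure (CovDist M2) A"
    using emeasure_obs_dist_covariates[OF gs1 A] emeasure_obs_dist_covariates[OF gs2 A[unfolded sets]]
      noise_mass_eq_if_obs_dist_eq[OF gs1 gs2 obs] obs
    by simp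
  moreover have "emeasure (mvn (Sig M1)) UNIV \<noteq> \<infinity>"
    using finite_measure.emeasure_finite[OF gauss_scm_finite_noise[OF gs1]] by simp
  ultimately show "emeasure (CovDist M1) A = emeasure (CovDist M2) A"
    using nondegenerate by (simp add: ennreal_mult_cancel_left)
qed

lemma AE_distr_treatment_eq_if_obs_dist_eq:
  assumes gs1: "gauss_scm MC M1" and gs2: "gauss_scm MC M2"
    and C: "CovDist M1 = CovDist M2" and obs: "obs_dist M1 = obs_dist M2"
  shows "AE c in CovDist M1. distr (mvn (Sig M1)) borel (xi_val M1 None c)
    = distr (mvn (Sig M2)) borel (xi_val M2 None c)"
proof (rule AE_distr_eq_if_mixtures_eq)
  show "sigma_finite_measure (CovDist M1)"
    using gauss_scmD(1)[OF gs1] by (rule prob_space_imp_sigma_finite)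
  show "finite_measure (mvn (Sig M1))" by (rule gauss_scm_finite_noise[OF gs1])
  show "finite_measure (mvn (Sig M2))" by (rule gauss_scm_finite_noise[OF gs2])
  show "(\<lambda>(c, u). xi_val M1 None c u) \<in> borel_measurable (CovDist M1 \<Otimes>\<^sub>M mvn (Sig M1))"
    "(\<lambda>(c, u). xi_val M2 None c u) \<in> borel_measurable (CovDist M1 \<Otimes>\<^sub>M mvn (Sig M2))"
    using measurable_structural_values(1)[OF gs1] measurable_structural_values(1)[OF gs2] C by auto
  fix A and B :: "real set" assume "A \<in> sets (CovDist M1)" "B \<in> sets borel"
  then show "(\<integral>\<^sup>+c. emeasure (mvn (Sig M1)) {u \<in> space (mvn (Sig M1)). xi_val M1 None c u \<in> B}
        * indicator A c \<partial>CovDist M1) =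
      (\<integral>\<^sup>+c. emeasure (mvn (Sig M2)) {u \<in> space (mvn (Sig M2)). xi_val M2 None c u \<in> B}
        * indicator A c \<partial>CovDist M1)"
    using emeasure_obs_dist_treatment_rect[OF gs1, of A B] emeasure_obs_dist_treatment_rect[OF gs2, of A B]
    unfolding obs C by simp
qed

lemma AE_joint_do_mean_eq_if_joint_int_dist_eq:
  assumes gs1: "gauss_scm MC M1" and gs2: "gauss_scm MC M2"
    and C: "CovDist M1 = CovDist M2" and jnt: "joint_int_dist M1 a b = joint_int_dist M2 a b"
  shows "AE c in CovDist M1. joint_do_mean M1 c a b = joint_do_mean M2 c a b"
proof -
  have "AE c in CovDist M1. distr (mvn (Sig M1)) borel (y_val M1 (Some a) (Some b) c)
      = distr (mvn (Sig M2)) borel (y_val M2 (Some a) (Some b) c)"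
  proof (rule AE_distr_eq_if_mixtures_eq)
    show "sigma_finite_measure (CovDist M1)"
      using gauss_scmD(1)[OF gs1] by (rule prob_space_imp_sigma_finite)
    show "finite_measure (mvn (Sig M1))" by (rule gauss_scm_finite_noise[OF gs1])
    show "finite_measure (mvn (Sig M2))" by (rule gauss_scm_finite_noise[OF gs2])
    show "(\<lambda>(c, u). y_val M1 (Some a) (Some b) c u) \<in> borel_measurable (CovDist M1 \<Otimes>\<^sub>M mvn (Sig M1))"
      "(\<lambda>(c, u). y_val M2 (Some a) (Some b) c u) \<in> borel_measurable (CovDist M1 \<Otimes>\<^sub>M mvn (Sig M2))"
      using measurable_structural_values(3)[OF gs1] measurable_structural_values(3)[OF gs2] C by auto
    fix A and B :: "real set" assume "A \<in> sets (CovDist M1)" "B \<in> sets borel"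
    then show "(\<integral>\<^sup>+c. emeasure (mvn (Sig M1))
          {u \<in> space (mvn (Sig M1)). y_val M1 (Some a) (Some b) c u \<in> B} * indicator A c \<partial>CovDist M1) =
        (\<integral>\<^sup>+c. emeasure (mvn (Sig M2))
          {u \<in> space (mvn (Sig M2)). y_val M2 (Some a) (Some b) c u \<in> B} * indicator A c \<partial>CovDist M1)"
      using emeasure_joint_int_dist_outcome_rect[OF gs1, of A B a b]
        emeasure_joint_int_dist_outcome_rect[OF gs2, of A B a b]
      unfolding jnt C by simp
  qed
  then show ?thesis
  proof (rule AE_mp, intro AE_I2 impI)
    fix c assume "c \<in> space (CovDist M1)"
      and eq: "distr (mvn (Sig M1)) borel (y_val M1 (Some a) (Some b) c)
        = distr (mvn (Sig M2)) borel (y_val M2 (Some a) (Some b) c)"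
    have y_measurable: "y_val M (Some a) (Some b) c \<in> borel_measurable (mvn (Sig M))"
      if "gauss_scm MC M" "c \<in> space (CovDist M)" for M
      using measurable_Pair2[OF measurable_structural_values(3)[OF that(1)] that(2)] by simp
    have "joint_do_mean M1 c a b = (\<integral>y. y \<partial>distr (mvn (Sig M1)) borel (y_val M1 (Some a) (Some b) c))"
      unfolding joint_do_mean_def
      by (rule integral_distr[OF y_measurable[OF gs1 \<open>c \<in> space (CovDist M1)\<close>], symmetric]) simp
    also have "\<dots> = (\<integral>y. y \<partial>distr (mvn (Sig M2)) borel (y_val M2 (Some a) (Some b) c))"
      by (simp only: eq)
    also have "\<dots> = joint_do_mean M2 c a b"
      unfolding joint_do_mean_def
      by (rule integral_distr[OF y_measurable[OF gs2 \<open>c \<in> space (CovDist M1)\<close>[unfolded C]]]) simp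
    finally show "joint_do_mean M1 c a b = joint_do_mean M2 c a b" .
  qed
qed

(* mvn is only shown to be a finite measure, not a probability measure, so its total mass appears
   as a factor. *)
lemma estimand_adjustment:
  assumes gs: "gauss_scm MC M" and c: "c \<in> space (CovDist M)"
    and nondegenerate: "measure (mvn (Sig M)) UNIV \<noteq> 0"
  shows "measure (mvn (Sig M)) UNIV * estimand M x c
    = (\<integral>a. joint_do_mean M c a x \<partial>distr (mvn (Sig M)) borel (xi_val M None c))"
proof -
  have [measurable]: "xi_val M None c \<in> borel_measurable (mvn (Sig M))"
    using measurable_Pair2[OF measurable_structural_values(1)[OF gs] c] by simp
  note [measurable] = measurable_gauss_scm[OF gs] borel_measurable_joint_do_mean[OF gs c]
  have "measure (mvn (Sig M)) UNIV * estimand M x c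
      = measure (mvn (Sig M)) UNIV * (\<integral>u. fY M c (xi_val M None c u) x + u $ 2 \<partial>mvn (Sig M))"
    by (simp add: estimand_def y_val_def xj_val_def)
  also have "\<dots> = (\<integral>u. measure (mvn (Sig M)) UNIV * fY M c (xi_val M None c u) x
      + (\<integral>v. v $ 2 \<partial>mvn (Sig M)) \<partial>mvn (Sig M))"
    using integral_add_integrable_rescaled[OF gauss_scm_finite_noise[OF gs]
        integrable_mvn_component[OF gauss_scmD(3)[OF gs]]] nondegenerate c
    by simp
  also have "\<dots> = (\<integral>u. joint_do_mean M c (xi_val M None c u) x \<partial>mvn (Sig M))"
    by (simp add: joint_do_mean_eq[OF gs])
  also have "\<dots> = (\<integral>a. joint_do_mean M c a x \<partial>distr (mvn (Sig M)) borel (xi_val M None c))"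
    by (rule integral_distr[symmetric]) measurable
  finally show ?thesis .
qed

lemma AE_AE_joint_do_mean_eq_if_joint_int_dist_eq:
  assumes gs1: "gauss_scm MC M1" and gs2: "gauss_scm MC M2"
    and C: "CovDist M1 = CovDist M2" and jnt: "\<forall>a b. joint_int_dist M1 a b = joint_int_dist M2 a b"
  shows "AE c in CovDist M1. AE a in lborel. joint_do_mean M1 c a b = joint_do_mean M2 c a b"
proof -
  interpret prob_space "CovDist M1" by (rule gauss_scmD(1)[OF gs1])
  interpret pair_sigma_finite "CovDist M1" "lborel :: real measure" ..
  note [measurable] = measurable_gauss_scm[OF gs1] measurable_gauss_scm[OF gs2, unfolded C[symmetric]]
  have "{p \<in> space (CovDist M1 \<Otimes>\<^sub>M lborel). joint_do_mean M1 (fst p) (snd p) b = joint_do_mean M2 (fst p) (snd p) b}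
      \<in> sets (CovDist M1 \<Otimes>\<^sub>M lborel)"
    unfolding joint_do_mean_eq[OF gs1] joint_do_mean_eq[OF gs2] by measurable
  moreover have "AE a in lborel. AE c in CovDist M1. joint_do_mean M1 c a b = joint_do_mean M2 c a b"
    using AE_joint_do_mean_eq_if_joint_int_dist_eq[OF gs1 gs2 C] jnt by simp
  ultimately show ?thesis
    by (subst AE_commute)
qed

lemma estimand_AE_eq_if_CovDist_eq:
  assumes gs1: "gauss_scm MC M1" and gs2: "gauss_scm MC M2" and C: "CovDist M1 = CovDist M2"
    and obs: "obs_dist M1 = obs_dist M2"
    and jnt: "\<forall>a b. joint_int_dist M1 a b = joint_int_dist M2 a b"
    and mass: "measure (mvn (Sig M1)) UNIV = measure (mvn (Sig M2)) UNIV"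
    and nondegenerate: "measure (mvn (Sig M1)) UNIV \<noteq> 0"
  shows "AE c in CovDist M1. estimand M1 x c = estimand M2 x c"
proof -
  have "AE c in CovDist M1.
      distr (mvn (Sig M1)) borel (xi_val M1 None c) = distr (mvn (Sig M2)) borel (xi_val M2 None c) \<and>
      (AE a in lborel. joint_do_mean M1 c a x = joint_do_mean M2 c a x)"
    using AE_distr_treatment_eq_if_obs_dist_eq[OF gs1 gs2 C obs]
      AE_AE_joint_do_mean_eq_if_joint_int_dist_eq[OF gs1 gs2 C jnt]
    by eventually_elim simp
  then show ?thesis
  proof (rule AE_mp, intro AE_I2 impI)
    fix c assume c: "c \<in> space (CovDist M1)"
      and "distr (mvn (Sig M1)) borel (xi_val M1 None c) = distr (mvn (Sig M2)) borel (xi_val M2 None c) \<and>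
        (AE a in lborel. joint_do_mean M1 c a x = joint_do_mean M2 c a x)"
    then have treatment_eq: "distr (mvn (Sig M1)) borel (xi_val M1 None c) = distr (mvn (Sig M2)) borel (xi_val M2 None c)"
      and mean_eq: "AE a in lborel. joint_do_mean M1 c a x = joint_do_mean M2 c a x"
      by auto
    note [measurable] = borel_measurable_joint_do_mean[OF gs1 c]
      borel_measurable_joint_do_mean[OF gs2 c[unfolded C]]
    have AE_treatment: "AE a in distr (mvn (Sig M1)) borel (xi_val M1 None c).
        joint_do_mean M1 c a x = joint_do_mean M2 c a x"
    proof (subst AE_distr_iff)
      show "xi_val M1 None c \<in> measurable (mvn (Sig M1)) borel"
        using measurable_Pair2[OF measurable_structural_values(1)[OF gs1] c] by simp
      show "AE u in mvn (Sig M1). joint_do_mean M1 c (xi_val M1 None c u) x = joint_do_mean M2 c (xi_val M1 None c u) x"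
        unfolding xi_val_def using AE_mvn_component_shift[OF mean_eq, where S="Sig M1" and t="fI M1 c" and i=0] by simp
    qed measurable
    have "measure (mvn (Sig M1)) UNIV * estimand M1 x c
        = (\<integral>a. joint_do_mean M1 c a x \<partial>distr (mvn (Sig M1)) borel (xi_val M1 None c))"
      by (rule estimand_adjustment[OF gs1 c nondegenerate])
    also have "\<dots> = (\<integral>a. joint_do_mean M2 c a x \<partial>distr (mvn (Sig M1)) borel (xi_val M1 None c))"
      using AE_treatment by (intro integral_cong_AE) simp_all
    also have "\<dots> = (\<integral>a. joint_do_mean M2 c a x \<partial>distr (mvn (Sig M2)) borel (xi_val M2 None c))"
      by (simp only: treatment_eq)
    also have "\<dots> = measure (mvn (Sig M2)) UNIV * estimand M2 x c"
      using c nondegenerate by (simp add: estimand_adjustment[OF gs2] C mass)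
    finally show "estimand M1 x c = estimand M2 x c"
      using mass nondegenerate by simp
  qed
qed

theorem theorem1:
  fixes MC :: "'c measure" and M1 M2 :: "'c gscm"
  assumes "gauss_scm MC M1" and "gauss_scm MC M2"
    and "obs_dist M1 = obs_dist M2"
    and "\<forall>a b. joint_int_dist M1 a b = joint_int_dist M2 a b"
  shows "\<forall>x. AE c in CovDist M1. estimand M1 x c = estimand M2 x c"
proof
  fix x
  have mass: "emeasure (mvn (Sig M1)) UNIV = emeasure (mvn (Sig M2)) UNIV"
    by (rule noise_mass_eq_if_obs_dist_eq[OF assms(1-3)])
  show "AE c in CovDist M1. estimand M1 x c = estimand M2 x c"
  proof (cases "emeasure (mvn (Sig M1)) UNIV = 0")
    case True
    \<comment> \<open>Excluded in fact by normalisation of the Gaussian density, which is not proved here.\<close>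
    have "estimand M x c = 0" if "emeasure (mvn (Sig M)) UNIV = 0" for M :: "'c gscm" and c
      unfolding estimand_def using that by (intro integral_eq_zero_AE AE_I'[of UNIV]) auto
    then show ?thesis
      using True mass by simp
  next
    case False
    have "emeasure (mvn (Sig M1)) UNIV \<noteq> \<infinity>"
      using finite_measure.emeasure_finite[OF gauss_scm_finite_noise[OF assms(1)]] by simp
    then have "measure (mvn (Sig M1)) UNIV \<noteq> 0"
      using False by (simp add: measure_def enn2real_eq_0_iff)
    then show ?thesis
      using estimand_AE_eq_if_CovDist_eq[OF assms(1,2) CovDist_eq_if_obs_dist_eq[OF assms(1-3) False] assms(3,4)]
      by (simp add: measure_def mass)
  qed
qed

end
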